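(* Let $\|\cdot\|$ be a $C^2$ and strictly convex norm on $\mathbb{R}^2$. Then for every $\varepsilon>0$ there exists $R>0$ such that for all points $a,b\in\mathbb{R}^2$ with $a\neq b$ and $\|b-a\|=1$, $$\sup\{\mathrm{dist}(z,L(a,b)) : z\in M(a,b)\setminus B(a,R)\}\leq\varepsilon,$$ where $\mathrm{dist}$ is the Euclidean distance and $B(a,R)$ the Euclidean open ball of center $a$ and radius $R$.
   Context: The norm is called $C^2$ and strictly convex if $x\mapsto\|x\|$ is $C^2$ on $\mathbb{R}^2\setminus\{0\}$ and the unit sphere $\partial B_{\|\cdot\|}(0,1)=\{\|x\|=1\}$ is a $C^2$ curve with strictly positive curvature (equivalently $D^2\|x\|(h,h)>0$ for $x\ne0$, $h$ not parallel to $x$). For $a,b\in\mathbb{R}^2$ the curve bisector is $M(a,b)=\{z\in\mathbb{R}^2:\|a-z\|=\|b-z\|\}$. For $x$ with $\|x\|=1$, there are exactly two points $y_1,y_2$ (with $y_2=-y_1$) on the unit sphere at which the tangent line to the unit sphere is directed by $x$; $L_x$ denotes the line through $y_1$ and $y_2$ (a line through the origin). For $x\neq0$ with $\|x\|\neq1$, $L_x:=L_{x/\|x\|}$. Finally $L(a,b):=\frac{a+b}{2}+L_{b-a}$. *)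

theory Defs
  imports "HOL-Analysis.Analysis"
begin

definition is_norm2 :: "(real^2 \<Rightarrow> real) \<Rightarrow> bool" where
  "is_norm2 N \<longleftrightarrow>
     (\<forall>x. 0 \<le> N x) \<and> (\<forall>x. N x = 0 \<longrightarrow> x = 0) \<and>
     (\<forall>c x. N (c *\<^sub>R x) = \<bar>c\<bar> * N x) \<and>
     (\<forall>x y. N (x + y) \<le> N x + N y)"

definition C2_strictly_convex_norm :: "(real^2 \<Rightarrow> real) \<Rightarrow> bool" where
  "C2_strictly_convex_norm N \<longleftrightarrow> is_norm2 N \<and>
     (\<exists>G :: real^2 \<Rightarrow> real^2. \<exists>H :: real^2 \<Rightarrow> real^2^2.
        (\<forall>x. x \<noteq> 0 \<longrightarrow> (N has_derivative (\<lambda>h. G x \<bullet> h)) (at x)) \<and>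
        (\<forall>x. x \<noteq> 0 \<longrightarrow> (G has_derivative (\<lambda>h. H x *v h)) (at x)) \<and>
        continuous_on (UNIV - {0}) H \<and>
        (\<forall>x h. x \<noteq> 0 \<longrightarrow> \<not> (\<exists>c. h = c *\<^sub>R x) \<longrightarrow> h \<bullet> (H x *v h) > 0))"

definition bisector :: "(real^2 \<Rightarrow> real) \<Rightarrow> real^2 \<Rightarrow> real^2 \<Rightarrow> (real^2) set" where
  "bisector N a b = {z. N (a - z) = N (b - z)}"

text \<open>The tangent line to the unit sphere \<open>{N = 1}\<close> at \<open>y\<close> is directed by \<open>u\<close>
  iff the differential of \<open>N\<close> at \<open>y\<close> vanishes on \<open>u\<close>.\<close>
definition tangent_directed :: "(real^2 \<Rightarrow> real) \<Rightarrow> real^2 \<Rightarrow> real^2 \<Rightarrow> bool" where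
  "tangent_directed N y u \<longleftrightarrow> (\<exists>D. (N has_derivative D) (at y) \<and> D u = 0)"

text \<open>\<open>L_x\<close>: the line through the (two, antipodal) points \<open>y\<close> of the unit sphere at which
  the tangent is directed by \<open>x / N x\<close>; written as the union of the lines \<open>\<real> y\<close>.\<close>
definition Ldir :: "(real^2 \<Rightarrow> real) \<Rightarrow> real^2 \<Rightarrow> (real^2) set" where
  "Ldir N x = (let u = x /\<^sub>R N x in
      {t *\<^sub>R y | t y. N y = 1 \<and> tangent_directed N y u})"

definition Lab :: "(real^2 \<Rightarrow> real) \<Rightarrow> real^2 \<Rightarrow> real^2 \<Rightarrow> (real^2) set" where
  "Lab N a b = (\<lambda>v. (1/2) *\<^sub>R (a + b) + v) ` Ldir N (b - a)"

end

theory Submission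
  imports Defs
begin

text \<open>Put \<open>w = b - a\<close> and \<open>q = z - (a + b)/2\<close>. The point \<open>z\<close> lies on the bisector iff
  \<open>s \<mapsto> N (q + s w)\<close> takes equal values at \<open>s = \<plusminus>1/2\<close>, so by Rolle its derivative
  \<open>\<nabla>N (q + \<sigma> w) \<bullet> w\<close> vanishes at some \<open>\<sigma>\<close>; then \<open>q + \<sigma> w \<in> L\<^sub>w\<close> and \<open>z\<close> is within
  \<open>|\<sigma>| |w|\<close> of \<open>L(a, b)\<close>. The second derivative along the chord is the Hessian form, which is
  homogeneous of degree \<open>-1\<close>; after rescaling by \<open>|q|\<close> the chord lies in a fixed annulus, where
  the Hessian form is uniformly continuous and, by strict convexity and compactness, bounded
  below in the directions tangent to the level curves. A function on \<open>[-1/2, 1/2]\<close> with equal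
  end values and an almost constant positive second derivative has its critical point near \<open>0\<close>,
  so \<open>\<sigma> \<rightarrow> 0\<close> uniformly as \<open>|z - a| \<rightarrow> \<infinity>\<close>.\<close>

lemma is_norm2_minus: "is_norm2 N \<Longrightarrow> N (- x) = N x"
  unfolding is_norm2_def by (metis abs_minus_cancel abs_one mult_1 scaleR_minus1_left)

lemma is_norm2_scaleR: "is_norm2 N \<Longrightarrow> 0 \<le> c \<Longrightarrow> N (c *\<^sub>R x) = c * N x"
  unfolding is_norm2_def by simp

lemma is_norm2_zero: "is_norm2 N \<Longrightarrow> N 0 = 0"
  using is_norm2_scaleR[of N 0 0] by simp

lemma is_norm2_pos: "is_norm2 N \<Longrightarrow> x \<noteq> 0 \<Longrightarrow> 0 < N x"
  unfolding is_norm2_def by (metis less_eq_real_def)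

lemma is_norm2_continuous:
  assumes "is_norm2 N"
  shows "continuous_on UNIV N"
proof -
  have "convex_on UNIV N"
  proof (rule convex_onI)
    fix t :: real and x y :: "real^2"
    assume t: "0 < t" "t < 1"
    have "N ((1 - t) *\<^sub>R x + t *\<^sub>R y) \<le> N ((1 - t) *\<^sub>R x) + N (t *\<^sub>R y)"
      using assms unfolding is_norm2_def by blast
    also have "\<dots> = (1 - t) * N x + t * N y"
      using is_norm2_scaleR[OF assms] t by simp
    finally show "N ((1 - t) *\<^sub>R x + t *\<^sub>R y) \<le> (1 - t) * N x + t * N y" .
  qed simp
  then show ?thesis
    by (intro convex_on_continuous) auto
qed

lemma is_norm2_unit_sphere_bounded:
  assumes "is_norm2 N"
  obtains C where "0 < C" "\<And>w. N w = 1 \<Longrightarrow> norm w \<le> C"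
proof -
  obtain x0 :: "real^2" where x0: "x0 \<in> sphere 0 1" "\<And>y. y \<in> sphere 0 1 \<Longrightarrow> N x0 \<le> N y"
    using continuous_attains_inf[OF compact_sphere _ continuous_on_subset[OF is_norm2_continuous[OF assms]]]
    by (metis sphere_eq_empty subset_UNIV zero_le_one not_le)
  have c: "0 < N x0"
    using x0(1) is_norm2_pos[OF assms, of x0] by (cases "x0 = 0") auto
  have "norm w \<le> 1 / N x0" if "N w = 1" for w
  proof -
    have "w \<noteq> 0"
      using that is_norm2_zero[OF assms] by auto
    then have "N x0 \<le> N ((1 / norm w) *\<^sub>R w)"
      using x0(2) by simp
    also have "\<dots> = 1 / norm w"
      using is_norm2_scaleR[OF assms, of "1 / norm w" w] that by simp
    finally show ?thesis
      using c \<open>w \<noteq> 0\<close> by (simp add: field_simps)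
  qed
  then show thesis
    using c by (intro that[of "1 / N x0"]) auto
qed

lemma bisector_midpoint_offset:
  assumes "is_norm2 N" "z \<in> bisector N a b"
  shows "N ((z - (1/2) *\<^sub>R (a + b)) + (1/2) *\<^sub>R (b - a))
       = N ((z - (1/2) *\<^sub>R (a + b)) + (-1/2) *\<^sub>R (b - a))"
proof -
  have offsets: "(z - (1/2) *\<^sub>R (a + b)) + (1/2) *\<^sub>R (b - a) = - (a - z)"
    "(z - (1/2) *\<^sub>R (a + b)) + (-1/2) *\<^sub>R (b - a) = - (b - z)"
    by (simp_all add: vec_eq_iff field_simps)
  show ?thesis
    using assms is_norm2_minus[OF assms(1), of "a - z"] is_norm2_minus[OF assms(1), of "b - z"]
    unfolding offsets bisector_def by simp
qed

lemma abs_diff_ge_of_deriv_ge: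
  fixes f f' :: "real \<Rightarrow> real"
  assumes deriv: "\<And>x. x \<in> {a..b} \<Longrightarrow> (f has_real_derivative f' x) (at x)"
    and lower: "\<And>x. x \<in> {a..b} \<Longrightarrow> m \<le> f' x"
    and st: "s \<in> {a..b}" "t \<in> {a..b}"
  shows "m * \<bar>t - s\<bar> \<le> \<bar>f t - f s\<bar>"
proof (cases "0 \<le> m")
  case False
  then have "m * \<bar>t - s\<bar> \<le> 0"
    by (intro mult_nonpos_nonneg) auto
  then show ?thesis
    by (smt (verit) abs_ge_zero)
next
  case True
  have incr: "m * (v - u) \<le> f v - f u" if uv: "u \<in> {a..b}" "v \<in> {a..b}" "u < v" for u v
  proof -
    obtain c where c: "u < c" "c < v" "f v - f u = (v - u) * f' c"
      using MVT2[OF \<open>u < v\<close>, of f f'] deriv uv by force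
    then have "m \<le> f' c"
      using lower uv by simp
    then show ?thesis
      using c by (simp add: mult.commute mult_right_mono)
  qed
  consider "s < t" | "s = t" | "t < s"
    by linarith
  then show ?thesis
  proof cases
    case 1
    then show ?thesis
      using incr[OF st 1] abs_ge_self[of "f t - f s"] by (simp add: abs_of_pos)
  next
    case 3
    then show ?thesis
      using incr[OF st(2,1) 3] abs_ge_self[of "f s - f t"]
      by (simp add: abs_of_pos abs_minus_commute)
  qed simp
qed

text \<open>The mean value theorem applied to the odd part \<open>f s - f (-s)\<close> gives some
  \<open>0 < s\<^sub>1 < h\<close> with \<open>f' s\<^sub>1 + f' (-s\<^sub>1) = 0\<close>; two more applications on
  \<open>[-s\<^sub>1, 0]\<close> and \<open>[0, s\<^sub>1]\<close> write \<open>-2 f' 0\<close> as \<open>s\<^sub>1\<close> times a difference of values of \<open>f''\<close>.\<close>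
lemma abs_deriv_centre_le_of_symmetric:
  fixes f f' f'' :: "real \<Rightarrow> real"
  assumes "0 < h"
    and deriv: "\<And>x. x \<in> {-h..h} \<Longrightarrow> (f has_real_derivative f' x) (at x)"
    and deriv2: "\<And>x. x \<in> {-h..h} \<Longrightarrow> (f' has_real_derivative f'' x) (at x)"
    and sym: "f h = f (-h)"
    and osc: "\<And>x y. x \<in> {-h..h} \<Longrightarrow> y \<in> {-h..h} \<Longrightarrow> \<bar>f'' x - f'' y\<bar> \<le> e"
  shows "\<bar>f' 0\<bar> \<le> h * e / 2"
proof -
  have odd_deriv: "((\<lambda>s. f s - f (-s)) has_real_derivative (f' s + f' (-s))) (at s)"
    if "0 \<le> s" "s \<le> h" for s
  proof -
    have "((\<lambda>s. f (-s)) has_real_derivative (f' (-s) * -1)) (at s)"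
      using DERIV_chain2[OF deriv[of "-s"] DERIV_minus[OF DERIV_ident]] that by simp
    from DERIV_diff[OF deriv[of s] this] that show ?thesis
      by simp
  qed
  obtain s1 where s1: "0 < s1" "s1 < h" "(f h - f (-h)) - (f 0 - f (-0)) = (h - 0) * (f' s1 + f' (-s1))"
    using MVT2[OF \<open>0 < h\<close> odd_deriv] by blast
  then have s1_zero: "f' s1 + f' (-s1) = 0"
    using sym \<open>0 < h\<close> by simp
  obtain a where a: "0 < a" "a < s1" "f' s1 - f' 0 = (s1 - 0) * f'' a"
    using MVT2[OF s1(1), of f' f''] deriv2 s1 by force
  obtain b where b: "-s1 < b" "b < 0" "f' 0 - f' (-s1) = (0 - -s1) * f'' b"
    using MVT2[of "-s1" 0 f' f''] deriv2 s1 by force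
  have "-2 * f' 0 = s1 * (f'' a - f'' b)"
    using a(3) b(3) s1_zero by (simp add: algebra_simps)
  then have "\<bar>-2 * f' 0\<bar> = \<bar>s1 * (f'' a - f'' b)\<bar>"
    by simp
  then have "2 * \<bar>f' 0\<bar> = s1 * \<bar>f'' a - f'' b\<bar>"
    using s1(1) by (simp add: abs_mult)
  also have "\<dots> \<le> h * e"
    using osc[of a b] a b s1 by (intro mult_mono) auto
  finally show ?thesis
    by simp
qed

lemma continuous_on_quadratic_form:
  fixes A :: "'a::topological_space \<Rightarrow> real^'n^'n" and v :: "'a \<Rightarrow> real^'n"
  assumes "continuous_on S A" "continuous_on S v"
  shows "continuous_on S (\<lambda>p. v p \<bullet> (A p *v v p))"
  unfolding inner_vec_def matrix_vector_mult_def
  by (intro continuous_intros assms)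

definition annulus :: "'a::real_normed_vector set" where
  "annulus = cball 0 2 - ball 0 (1/2)"

lemma mem_annulus: "x \<in> annulus \<longleftrightarrow> 1/2 \<le> norm x \<and> norm x \<le> 2"
  unfolding annulus_def by auto

lemma compact_annulus: "compact (annulus :: 'a::{real_normed_vector,heine_borel} set)"
  unfolding annulus_def by (intro compact_diff) auto

lemma annulus_nonzero: "x \<in> annulus \<Longrightarrow> x \<noteq> 0"
  unfolding mem_annulus by auto

lemma scaled_chord_in_annulus:
  fixes q w :: "'a::real_normed_vector"
  assumes "q \<noteq> 0" "norm w \<le> norm q" "\<bar>s\<bar> \<le> 1/2"
  shows "(1 / norm q) *\<^sub>R (q + s *\<^sub>R w) \<in> annulus"
proof -
  define x where "x = q + s *\<^sub>R w"
  have "norm (s *\<^sub>R w) \<le> norm q / 2"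
    using assms(2,3) mult_mono[OF assms(3,2)] by simp
  moreover have "norm q - norm (s *\<^sub>R w) \<le> norm x"
    unfolding x_def by (metis norm_diff_ineq norm_minus_cancel diff_minus_eq_add)
  moreover have "norm x \<le> norm q + norm (s *\<^sub>R w)"
    unfolding x_def by (rule norm_triangle_ineq)
  ultimately have "norm q / 2 \<le> norm x" "norm x \<le> 2 * norm q"
    by linarith+
  then show ?thesis
    using assms(1) unfolding mem_annulus x_def[symmetric] by (simp add: field_simps)
qed

lemma chord_nonzero:
  fixes q w :: "'a::real_normed_vector"
  assumes "q \<noteq> 0" "norm w \<le> norm q" "\<bar>s\<bar> \<le> 1/2"
  shows "q + s *\<^sub>R w \<noteq> 0"
  using annulus_nonzero[OF scaled_chord_in_annulus[OF assms]] by auto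

lemma dist_scaled_chord_le:
  fixes q w :: "'a::real_normed_vector"
  assumes "\<bar>s\<bar> \<le> 1/2" "\<bar>s'\<bar> \<le> 1/2"
  shows "dist ((1 / norm q) *\<^sub>R (q + s *\<^sub>R w)) ((1 / norm q) *\<^sub>R (q + s' *\<^sub>R w)) \<le> norm w / norm q"
proof -
  have "dist ((1 / norm q) *\<^sub>R (q + s *\<^sub>R w)) ((1 / norm q) *\<^sub>R (q + s' *\<^sub>R w))
      = \<bar>s - s'\<bar> * (norm w / norm q)"
    unfolding dist_norm
    by (simp add: algebra_simps abs_divide flip: scaleR_diff_left scaleR_right_diff_distrib diff_divide_distrib)
  also have "\<dots> \<le> norm w / norm q"
    using assms by (intro mult_left_le_one_le) auto
  finally show ?thesis .
qed

locale strictly_convex_C2_norm =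
  fixes N :: "real^2 \<Rightarrow> real" and G :: "real^2 \<Rightarrow> real^2" and H :: "real^2 \<Rightarrow> real^2^2"
  assumes is_norm: "is_norm2 N"
    and has_derivative_N: "\<And>x. x \<noteq> 0 \<Longrightarrow> (N has_derivative (\<lambda>h. G x \<bullet> h)) (at x)"
    and has_derivative_G: "\<And>x. x \<noteq> 0 \<Longrightarrow> (G has_derivative (\<lambda>h. H x *v h)) (at x)"
    and continuous_H: "continuous_on (UNIV - {0}) H"
    and hessian_pos: "\<And>x h. x \<noteq> 0 \<Longrightarrow> \<not> (\<exists>c. h = c *\<^sub>R x) \<Longrightarrow> 0 < h \<bullet> (H x *v h)"
begin

lemma gradient_scaleR:
  assumes "x \<noteq> 0" "0 < t"
  shows "G (t *\<^sub>R x) = G x"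
proof -
  have tx: "t *\<^sub>R x \<noteq> 0"
    using assms by simp
  have "((\<lambda>y. N (t *\<^sub>R y)) has_derivative (\<lambda>h. G (t *\<^sub>R x) \<bullet> (t *\<^sub>R h))) (at x)"
    using has_derivative_compose[OF has_derivative_scaleR_right[OF has_derivative_ident]
        has_derivative_N[OF tx]] by simp
  moreover have "(\<lambda>y. N (t *\<^sub>R y)) = (\<lambda>y. t * N y)"
    using is_norm2_scaleR[OF is_norm] assms by auto
  ultimately have "(\<lambda>h. G (t *\<^sub>R x) \<bullet> (t *\<^sub>R h)) = (\<lambda>h. t * (G x \<bullet> h))"
    using has_derivative_unique has_derivative_mult_right[OF has_derivative_N[OF assms(1)]]
    by metis
  then have "t * ((G (t *\<^sub>R x) - G x) \<bullet> h) = 0" for h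
    by (metis (no_types) inner_diff_left inner_scaleR_right right_diff_distrib' diff_self)
  then have "(G (t *\<^sub>R x) - G x) \<bullet> (G (t *\<^sub>R x) - G x) = 0"
    using assms by simp
  then show ?thesis
    by simp
qed

lemma hessian_scaleR:
  assumes "x \<noteq> 0" "0 < t"
  shows "t *\<^sub>R (H (t *\<^sub>R x) *v h) = H x *v h"
proof -
  have tx: "t *\<^sub>R x \<noteq> 0"
    using assms by simp
  have "((\<lambda>y. G (t *\<^sub>R y)) has_derivative (\<lambda>h. H (t *\<^sub>R x) *v (t *\<^sub>R h))) (at x)"
    using has_derivative_compose[OF has_derivative_scaleR_right[OF has_derivative_ident]
        has_derivative_G[OF tx]] by simp
  moreover have "(\<lambda>y. G (t *\<^sub>R y)) = G"
  proof
    show "G (t *\<^sub>R y) = G y" for y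
      using gradient_scaleR[of y t] assms(2) by (cases "y = 0") auto
  qed
  ultimately have "(\<lambda>h. H (t *\<^sub>R x) *v (t *\<^sub>R h)) = (\<lambda>h. H x *v h)"
    using has_derivative_unique has_derivative_G[OF assms(1)] by metis
  then show ?thesis
    by (metis matrix_vector_mult_scaleR)
qed

lemma gradient_inner_self:
  assumes "x \<noteq> 0"
  shows "G x \<bullet> x = N x"
proof -
  have "((\<lambda>s::real. x + s *\<^sub>R x) has_derivative (\<lambda>s. s *\<^sub>R x)) (at 0)"
    by (auto intro!: derivative_eq_intros)
  from has_derivative_compose[OF this has_derivative_N[of "x + 0 *\<^sub>R x"]] assms
  have "((\<lambda>s::real. N (x + s *\<^sub>R x)) has_derivative (\<lambda>s. G x \<bullet> (s *\<^sub>R x))) (at 0)"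
    by simp
  moreover have "((\<lambda>s::real. N (x + s *\<^sub>R x)) has_derivative (\<lambda>s. s * N x)) (at 0)"
  proof (rule has_derivative_transform_within_open[of "\<lambda>s. (1 + s) * N x" _ _ _ "{-1<..}"])
    show "((\<lambda>s. (1 + s) * N x) has_derivative (\<lambda>s. s * N x)) (at 0)"
      by (auto intro!: derivative_eq_intros)
    show "(1 + s) * N x = N (x + s *\<^sub>R x)" if "s \<in> {-1<..}" for s
      using that is_norm2_scaleR[OF is_norm, of "1 + s" x] by (simp add: algebra_simps)
  qed auto
  ultimately have "(\<lambda>s. G x \<bullet> (s *\<^sub>R x)) = (\<lambda>s. s * N x)"
    by (rule has_derivative_unique)
  then show ?thesis
    by (metis inner_scaleR_right mult_1)
qed

lemma continuous_on_gradient: "continuous_on (UNIV - {0}) G"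
  by (metis Diff_iff continuous_at_imp_continuous_on has_derivative_G
      has_derivative_continuous insertI1)

definition hess_form :: "real^2 \<Rightarrow> real^2 \<Rightarrow> real" where
  "hess_form x w = w \<bullet> (H x *v w)"

lemma hess_form_scaleR:
  assumes "x \<noteq> 0" "0 < t"
  shows "hess_form (t *\<^sub>R x) w = hess_form x w / t"
  using hessian_scaleR[OF assms, of w] assms(2) unfolding hess_form_def
  by (metis inner_scaleR_right nonzero_mult_div_cancel_left less_irrefl)

lemma continuous_on_hess_form:
  assumes "S \<subseteq> (UNIV - {0}) \<times> UNIV"
  shows "continuous_on S (\<lambda>p. hess_form (fst p) (snd p))"
  unfolding hess_form_def
proof (rule continuous_on_quadratic_form)
  show "continuous_on S (\<lambda>p. H (fst p))"
    by (rule continuous_on_compose2[OF continuous_H continuous_on_fst]) (use assms in auto)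
qed (intro continuous_intros)

lemma hess_form_tangent_pos:
  assumes "y \<noteq> 0" "w \<noteq> 0" "G y \<bullet> w = 0"
  shows "0 < hess_form y w"
  unfolding hess_form_def
proof (rule hessian_pos[OF assms(1)])
  show "\<not> (\<exists>c. w = c *\<^sub>R y)"
  proof
    assume "\<exists>c. w = c *\<^sub>R y"
    then obtain c where c: "w = c *\<^sub>R y" ..
    then have "c * N y = 0"
      using assms(3) gradient_inner_self[OF assms(1)] by simp
    then show False
      using c assms(2) is_norm2_pos[OF is_norm assms(1)] by simp
  qed
qed

lemma hess_form_tangent_lower_bound:
  obtains m where "0 < m"
    "\<And>y w. y \<in> annulus \<Longrightarrow> N w = 1 \<Longrightarrow> G y \<bullet> w = 0 \<Longrightarrow> m \<le> hess_form y w"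
proof -
  obtain C where C: "\<And>w. N w = 1 \<Longrightarrow> norm w \<le> C"
    using is_norm2_unit_sphere_bounded[OF is_norm] by blast
  define B where "B = (annulus :: (real^2) set) \<times> cball (0::real^2) C"
  define K where "K = {p \<in> B. (N (snd p), G (fst p) \<bullet> snd p) = (1, 0)}"
  have "compact B"
    unfolding B_def by (intro compact_Times compact_annulus compact_cball)
  have "continuous_on B (\<lambda>p. (N (snd p), G (fst p) \<bullet> snd p))"
    using annulus_nonzero unfolding B_def
    by (intro continuous_intros continuous_on_compose2[OF is_norm2_continuous[OF is_norm]]
        continuous_on_compose2[OF continuous_on_gradient]) auto
  then have "closed K"
    unfolding K_def using \<open>compact B\<close> by (intro continuous_closed_preimage_constant compact_imp_closed)
  then have "compact K"
    using closed_Int_compact[OF _ \<open>compact B\<close>] by (metis (no_types, lifting) K_def Int_absorb2 mem_Collect_eq subsetI)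
  have K_nonzero: "fst p \<noteq> 0" "snd p \<noteq> 0" if "p \<in> K" for p
    using that is_norm2_zero[OF is_norm] unfolding K_def B_def by (auto dest: annulus_nonzero)
  have memK: "(y, w) \<in> K" if "y \<in> annulus" "N w = 1" "G y \<bullet> w = 0" for y w
    using that C unfolding K_def B_def by auto
  show thesis
  proof (cases "K = {}")
    case True
    then show thesis
      using memK by (intro that[of 1]) auto
  next
    case False
    have "continuous_on K (\<lambda>p. hess_form (fst p) (snd p))"
      using K_nonzero by (intro continuous_on_hess_form) force
    then obtain k where k: "k \<in> K" "\<And>p. p \<in> K \<Longrightarrow> hess_form (fst k) (snd k) \<le> hess_form (fst p) (snd p)"
      using continuous_attains_inf[OF \<open>compact K\<close> False] by blast
    have "0 < hess_form (fst k) (snd k)"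
      using k(1) K_nonzero[OF k(1)] by (intro hess_form_tangent_pos) (auto simp: K_def)
    then show thesis
      using k memK by (intro that) force+
  qed
qed

lemma hess_form_uniformly_continuous:
  assumes "0 < \<eta>"
  obtains \<delta> where "0 < \<delta>"
    "\<And>x x' w. x \<in> annulus \<Longrightarrow> x' \<in> annulus \<Longrightarrow> norm w \<le> C \<Longrightarrow> dist x x' < \<delta> \<Longrightarrow>
       \<bar>hess_form x w - hess_form x' w\<bar> < \<eta>"
proof -
  define S where "S = (annulus :: (real^2) set) \<times> cball (0::real^2) C"
  have "continuous_on S (\<lambda>p. hess_form (fst p) (snd p))"
    using annulus_nonzero unfolding S_def by (intro continuous_on_hess_form) auto
  then have "uniformly_continuous_on S (\<lambda>p. hess_form (fst p) (snd p))"
    unfolding S_def by (intro compact_uniformly_continuous compact_Times compact_annulus) auto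
  then obtain \<delta> where \<delta>: "0 < \<delta>" "\<And>p p'. p \<in> S \<Longrightarrow> p' \<in> S \<Longrightarrow> dist p' p < \<delta> \<Longrightarrow>
      dist (hess_form (fst p') (snd p')) (hess_form (fst p) (snd p)) < \<eta>"
    using assms unfolding uniformly_continuous_on_def by metis
  show thesis
  proof (rule that[OF \<delta>(1)])
    fix x x' w :: "real^2"
    assume "x \<in> annulus" "x' \<in> annulus" "norm w \<le> C" "dist x x' < \<delta>"
    then have "dist (hess_form x w) (hess_form x' w) < \<eta>"
      using \<delta>(2)[of "(x', w)" "(x, w)"] unfolding S_def by (simp add: dist_Pair_Pair dist_commute)
    then show "\<bar>hess_form x w - hess_form x' w\<bar> < \<eta>"
      by (simp add: dist_real_def)
  qed
qed

lemma has_real_derivative_norm_on_line: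
  assumes "q + s *\<^sub>R w \<noteq> 0"
  shows "((\<lambda>s. N (q + s *\<^sub>R w)) has_real_derivative G (q + s *\<^sub>R w) \<bullet> w) (at s)"
proof -
  have "((\<lambda>s. q + s *\<^sub>R w) has_derivative (\<lambda>t. t *\<^sub>R w)) (at s)"
    by (auto intro!: derivative_eq_intros)
  from has_derivative_compose[OF this has_derivative_N[OF assms]]
  show ?thesis
    by (simp add: has_field_derivative_def mult_commute_abs)
qed

lemma has_real_derivative_gradient_on_line:
  assumes "q + s *\<^sub>R w \<noteq> 0"
  shows "((\<lambda>s. G (q + s *\<^sub>R w) \<bullet> w) has_real_derivative hess_form (q + s *\<^sub>R w) w) (at s)"
proof -
  have "((\<lambda>s. q + s *\<^sub>R w) has_derivative (\<lambda>t. t *\<^sub>R w)) (at s)"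
    by (auto intro!: derivative_eq_intros)
  from has_derivative_inner_left[OF has_derivative_compose[OF this has_derivative_G[OF assms]]]
  show ?thesis
    unfolding hess_form_def
    by (simp add: has_field_derivative_def matrix_vector_mult_scaleR inner_commute mult_commute_abs)
qed

lemma gradient_orthogonal_imp_in_Ldir:
  assumes "v \<noteq> 0" "w \<noteq> 0" "G v \<bullet> w = 0"
  shows "v \<in> Ldir N w"
proof -
  have Nv: "0 < N v" "0 < N w"
    using is_norm2_pos[OF is_norm] assms(1,2) by auto
  define y where "y = (1 / N v) *\<^sub>R v"
  have "y \<noteq> 0" "G y = G v"
    using assms(1) Nv gradient_scaleR[OF assms(1), of "1 / N v"] unfolding y_def by auto
  then have "(N has_derivative (\<lambda>h. G y \<bullet> h)) (at y)" "G y \<bullet> (w /\<^sub>R N w) = 0"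
    using has_derivative_N[of y] assms(3) by simp_all
  then have "tangent_directed N y (w /\<^sub>R N w)"
    unfolding tangent_directed_def by blast
  moreover have "N y = 1"
    using is_norm2_scaleR[OF is_norm, of "1 / N v" v] Nv unfolding y_def by simp
  moreover have "v = N v *\<^sub>R y"
    using Nv unfolding y_def by simp
  ultimately show ?thesis
    unfolding Ldir_def Let_def by blast
qed

lemma hess_form_on_chord:
  assumes m: "\<And>y. y \<in> annulus \<Longrightarrow> G y \<bullet> w = 0 \<Longrightarrow> m \<le> hess_form y w"
    and \<eta>: "\<eta> \<le> m / 2"
    and \<delta>: "\<And>x x'. x \<in> annulus \<Longrightarrow> x' \<in> annulus \<Longrightarrow> dist x x' < \<delta> \<Longrightarrow>
      \<bar>hess_form x w - hess_form x' w\<bar> < \<eta>"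
    and w: "q \<noteq> 0" "norm w \<le> norm q" "norm w < \<delta> * norm q"
    and \<sigma>: "\<bar>\<sigma>\<bar> \<le> 1/2" "G (q + \<sigma> *\<^sub>R w) \<bullet> w = 0"
  shows hess_form_on_chord_lower:
      "\<And>s. \<bar>s\<bar> \<le> 1/2 \<Longrightarrow> m / 2 / norm q \<le> hess_form (q + s *\<^sub>R w) w"
    and hess_form_on_chord_osc: "\<And>s s'. \<bar>s\<bar> \<le> 1/2 \<Longrightarrow> \<bar>s'\<bar> \<le> 1/2 \<Longrightarrow>
      \<bar>hess_form (q + s *\<^sub>R w) w - hess_form (q + s' *\<^sub>R w) w\<bar> \<le> \<eta> / norm q"
proof -
  define V where "V = norm q"
  define y where "y s = (1 / V) *\<^sub>R (q + s *\<^sub>R w)" for s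
  have "0 < V"
    using w(1) unfolding V_def by simp
  have y_annulus: "y s \<in> annulus" if "\<bar>s\<bar> \<le> 1/2" for s
    using scaled_chord_in_annulus[OF w(1,2) that] unfolding y_def V_def .
  have hess_chord: "hess_form (q + s *\<^sub>R w) w = hess_form (y s) w / V" if "\<bar>s\<bar> \<le> 1/2" for s
  proof -
    have "q + s *\<^sub>R w = V *\<^sub>R y s"
      using \<open>0 < V\<close> unfolding y_def by simp
    then show ?thesis
      using hess_form_scaleR[OF annulus_nonzero[OF y_annulus[OF that]] \<open>0 < V\<close>] by simp
  qed
  have close: "\<bar>hess_form (y s) w - hess_form (y s') w\<bar> < \<eta>"
    if "\<bar>s\<bar> \<le> 1/2" "\<bar>s'\<bar> \<le> 1/2" for s s'
  proof (rule \<delta>[OF y_annulus[OF that(1)] y_annulus[OF that(2)]])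
    have "norm w / V < \<delta>"
      using w(3) \<open>0 < V\<close> unfolding V_def by (simp add: field_simps)
    then show "dist (y s) (y s') < \<delta>"
      using dist_scaled_chord_le[OF that, of q w] unfolding y_def V_def by linarith
  qed
  have "G (y \<sigma>) = G (q + \<sigma> *\<^sub>R w)"
    using gradient_scaleR[OF annulus_nonzero[OF y_annulus[OF \<sigma>(1)]] \<open>0 < V\<close>] \<open>0 < V\<close>
    unfolding y_def by simp
  then have "m \<le> hess_form (y \<sigma>) w"
    using m y_annulus \<sigma> by simp
  then show "m / 2 / norm q \<le> hess_form (q + s *\<^sub>R w) w" if "\<bar>s\<bar> \<le> 1/2" for s
    using close[OF that \<sigma>(1)] \<eta> hess_chord[OF that] \<open>0 < V\<close> unfolding V_def
    by (simp add: field_simps)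
  show "\<bar>hess_form (q + s *\<^sub>R w) w - hess_form (q + s' *\<^sub>R w) w\<bar> \<le> \<eta> / norm q"
    if "\<bar>s\<bar> \<le> 1/2" "\<bar>s'\<bar> \<le> 1/2" for s s'
  proof -
    have "\<bar>hess_form (y s) w - hess_form (y s') w\<bar> / V \<le> \<eta> / V"
      using close[OF that] \<open>0 < V\<close> by (simp add: divide_right_mono)
    then show ?thesis
      using hess_chord[OF that(1)] hess_chord[OF that(2)] \<open>0 < V\<close> unfolding V_def
      by (simp add: abs_divide flip: diff_divide_distrib)
  qed
qed

lemma chord_critical_point_in_Ldir:
  assumes m: "\<And>y. y \<in> annulus \<Longrightarrow> G y \<bullet> w = 0 \<Longrightarrow> m \<le> hess_form y w"
    and \<eta>: "0 < \<eta>" "\<eta> \<le> m / 2"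
    and \<delta>: "\<And>x x'. x \<in> annulus \<Longrightarrow> x' \<in> annulus \<Longrightarrow> dist x x' < \<delta> \<Longrightarrow>
      \<bar>hess_form x w - hess_form x' w\<bar> < \<eta>"
    and w: "w \<noteq> 0" "norm w \<le> norm q" "norm w < \<delta> * norm q"
    and sym: "N (q + (1/2) *\<^sub>R w) = N (q + (-1/2) *\<^sub>R w)"
  shows "\<exists>\<sigma>. \<bar>\<sigma>\<bar> * m \<le> \<eta> \<and> q + \<sigma> *\<^sub>R w \<in> Ldir N w"
proof -
  define x where "x s = q + s *\<^sub>R w" for s
  have "q \<noteq> 0"
    using w by auto
  have half: "\<bar>s\<bar> \<le> 1/2" if "s \<in> {-1/2..1/2}" for s :: real
    using that by auto
  have x_nonzero: "x s \<noteq> 0" if "s \<in> {-1/2..1/2}" for s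
    using chord_nonzero[OF \<open>q \<noteq> 0\<close> w(2) half[OF that]] unfolding x_def .
  have d1: "((\<lambda>s. N (x s)) has_real_derivative G (x s) \<bullet> w) (at s)" if "s \<in> {-1/2..1/2}" for s
    using has_real_derivative_norm_on_line x_nonzero[OF that] unfolding x_def by blast
  have d2: "((\<lambda>s. G (x s) \<bullet> w) has_real_derivative hess_form (x s) w) (at s)"
    if "s \<in> {-1/2..1/2}" for s
    using has_real_derivative_gradient_on_line x_nonzero[OF that] unfolding x_def by blast
  obtain \<sigma> where \<sigma>: "-1/2 < \<sigma>" "\<sigma> < 1/2"
    "N (x (1/2)) - N (x (-1/2)) = (1/2 - -1/2) * (G (x \<sigma>) \<bullet> w)"
    using MVT2[of "-1/2" "1/2" "\<lambda>s. N (x s)"] d1 by force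
  then have critical: "G (x \<sigma>) \<bullet> w = 0"
    using sym unfolding x_def by simp
  have chord_facts: "\<bar>\<sigma>\<bar> \<le> 1/2" "G (q + \<sigma> *\<^sub>R w) \<bullet> w = 0"
    using \<sigma> critical unfolding x_def by auto
  have lower: "m / 2 / norm q \<le> hess_form (x s) w" if "s \<in> {-1/2..1/2}" for s
    unfolding x_def using m \<eta>(2) \<delta> \<open>q \<noteq> 0\<close> w(2,3) chord_facts half[OF that]
    by (rule hess_form_on_chord_lower)
  have osc: "\<bar>hess_form (x s) w - hess_form (x s') w\<bar> \<le> \<eta> / norm q"
    if "s \<in> {-1/2..1/2}" "s' \<in> {-1/2..1/2}" for s s'
    unfolding x_def using m \<eta>(2) \<delta> \<open>q \<noteq> 0\<close> w(2,3) chord_facts half[OF that(1)] half[OF that(2)]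
    by (rule hess_form_on_chord_osc)
  have "m / 2 / norm q * \<bar>\<sigma> - 0\<bar> \<le> \<bar>G (x \<sigma>) \<bullet> w - G (x 0) \<bullet> w\<bar>"
    using abs_diff_ge_of_deriv_ge[of "-1/2" "1/2", OF d2 lower, of 0 \<sigma>] \<sigma> by simp
  also have "\<dots> \<le> 1/2 * (\<eta> / norm q) / 2"
    using abs_deriv_centre_le_of_symmetric[of "1/2" "\<lambda>s. N (x s)", OF _ d1 d2 _ osc] sym critical
    unfolding x_def by simp
  finally have "\<bar>\<sigma>\<bar> * m \<le> \<eta>"
    using \<open>q \<noteq> 0\<close> \<eta>(1) by (simp add: field_simps)
  moreover have "x \<sigma> \<in> Ldir N w"
    using gradient_orthogonal_imp_in_Ldir[OF x_nonzero w(1) critical] \<sigma> by simp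
  ultimately show ?thesis
    unfolding x_def by blast
qed

lemma far_chord_critical_point_in_Ldir:
  assumes "0 < \<epsilon>"
  obtains R where "0 < R"
    "\<And>q w. N w = 1 \<Longrightarrow> R \<le> norm q \<Longrightarrow> N (q + (1/2) *\<^sub>R w) = N (q + (-1/2) *\<^sub>R w) \<Longrightarrow>
       \<exists>\<sigma>. \<bar>\<sigma>\<bar> \<le> \<epsilon> \<and> q + \<sigma> *\<^sub>R w \<in> Ldir N w"
proof -
  obtain C where C: "0 < C" "\<And>w. N w = 1 \<Longrightarrow> norm w \<le> C"
    using is_norm2_unit_sphere_bounded[OF is_norm] by blast
  obtain m where m: "0 < m" "\<And>y w. y \<in> annulus \<Longrightarrow> N w = 1 \<Longrightarrow> G y \<bullet> w = 0 \<Longrightarrow> m \<le> hess_form y w"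
    using hess_form_tangent_lower_bound by blast
  define \<eta> where "\<eta> = min (m / 2) (\<epsilon> * m)"
  have \<eta>: "0 < \<eta>" "\<eta> \<le> m / 2" "\<eta> \<le> \<epsilon> * m"
    using m(1) assms unfolding \<eta>_def by auto
  obtain \<delta> where \<delta>: "0 < \<delta>" "\<And>x x' w. x \<in> annulus \<Longrightarrow> x' \<in> annulus \<Longrightarrow> norm w \<le> C \<Longrightarrow>
      dist x x' < \<delta> \<Longrightarrow> \<bar>hess_form x w - hess_form x' w\<bar> < \<eta>"
    using hess_form_uniformly_continuous[OF \<eta>(1)] by blast
  show thesis
  proof (rule that[of "C + C / \<delta> + 1"])
    show "0 < C + C / \<delta> + 1"
      using C(1) \<delta>(1) by (simp add: add_pos_nonneg)
    fix q w
    assume w: "N w = 1" and q: "C + C / \<delta> + 1 \<le> norm q"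
      and sym: "N (q + (1/2) *\<^sub>R w) = N (q + (-1/2) *\<^sub>R w)"
    have "0 \<le> C / \<delta>"
      using C(1) \<delta>(1) by simp
    then have "C < norm q" "C / \<delta> < norm q"
      using q C(1) by linarith+
    then have "norm w \<le> norm q" "norm w < \<delta> * norm q"
      using C(2)[OF w] \<delta>(1) by (auto simp: pos_divide_less_eq mult.commute)
    moreover have "w \<noteq> 0"
      using w is_norm2_zero[OF is_norm] by auto
    ultimately have "\<exists>\<sigma>. \<bar>\<sigma>\<bar> * m \<le> \<eta> \<and> q + \<sigma> *\<^sub>R w \<in> Ldir N w"
      by (intro chord_critical_point_in_Ldir[OF m(2)[OF _ w] \<eta>(1,2) \<delta>(2)[OF _ _ C(2)[OF w]] _ _ _ sym])
    then obtain \<sigma> where "\<bar>\<sigma>\<bar> * m \<le> \<eta>" "q + \<sigma> *\<^sub>R w \<in> Ldir N w"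
      by blast
    moreover have "\<bar>\<sigma>\<bar> * m \<le> \<epsilon> * m"
      using \<open>\<bar>\<sigma>\<bar> * m \<le> \<eta>\<close> \<eta>(3) by linarith
    then have "\<bar>\<sigma>\<bar> \<le> \<epsilon>"
      by (rule mult_right_le_imp_le[OF _ m(1)])
    ultimately show "\<exists>\<sigma>. \<bar>\<sigma>\<bar> \<le> \<epsilon> \<and> q + \<sigma> *\<^sub>R w \<in> Ldir N w"
      by blast
  qed
qed

lemma far_bisector_points_near_Lab:
  assumes "0 < \<epsilon>"
  shows "\<exists>R>0. \<forall>a b. a \<noteq> b \<and> N (b - a) = 1 \<longrightarrow>
           (\<forall>z \<in> bisector N a b - ball a R. infdist z (Lab N a b) \<le> \<epsilon>)"
proof -
  obtain C where C: "0 < C" "\<And>w. N w = 1 \<Longrightarrow> norm w \<le> C"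
    using is_norm2_unit_sphere_bounded[OF is_norm] by blast
  obtain R where R: "0 < R" "\<And>q w. N w = 1 \<Longrightarrow> R \<le> norm q \<Longrightarrow>
      N (q + (1/2) *\<^sub>R w) = N (q + (-1/2) *\<^sub>R w) \<Longrightarrow> \<exists>\<sigma>. \<bar>\<sigma>\<bar> \<le> \<epsilon> / C \<and> q + \<sigma> *\<^sub>R w \<in> Ldir N w"
    using far_chord_critical_point_in_Ldir[of "\<epsilon> / C"] assms C(1) by auto
  have "infdist z (Lab N a b) \<le> \<epsilon>"
    if ab: "N (b - a) = 1" "z \<in> bisector N a b" "R + C / 2 \<le> norm (z - a)" for a b z
  proof -
    define w where "w = b - a"
    define q where "q = z - (1/2) *\<^sub>R (a + b)"
    have "z - a = q + (1/2) *\<^sub>R w"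
      unfolding q_def w_def by (simp add: vec_eq_iff field_simps)
    then have "norm (z - a) \<le> norm q + norm ((1/2) *\<^sub>R w)"
      by (metis norm_triangle_ineq)
    then have "R \<le> norm q"
      using ab(1,3) C(2) unfolding w_def by fastforce
    then obtain \<sigma> where \<sigma>: "\<bar>\<sigma>\<bar> \<le> \<epsilon> / C" "q + \<sigma> *\<^sub>R w \<in> Ldir N w"
      using R(2) ab(1) bisector_midpoint_offset[OF is_norm ab(2)] unfolding q_def w_def by blast
    have "(1/2) *\<^sub>R (a + b) + (q + \<sigma> *\<^sub>R w) \<in> Lab N a b"
      using \<sigma>(2) unfolding Lab_def w_def by blast
    then have "infdist z (Lab N a b) \<le> dist z ((1/2) *\<^sub>R (a + b) + (q + \<sigma> *\<^sub>R w))"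
      by (rule infdist_le)
    also have "\<dots> = \<bar>\<sigma>\<bar> * norm w"
      unfolding q_def dist_norm by (simp add: algebra_simps)
    also have "\<dots> \<le> \<epsilon> / C * C"
      using \<sigma>(1) C(2) ab(1) unfolding w_def by (intro mult_mono) auto
    finally show ?thesis
      using C(1) by simp
  qed
  moreover have "0 < R + C / 2"
    using R(1) C(1) by simp
  ultimately show ?thesis
    by (fastforce simp: dist_norm norm_minus_commute)
qed

end

theorem proposition2p1:
  fixes N :: "real^2 \<Rightarrow> real"
  assumes "C2_strictly_convex_norm N"
  shows "\<forall>\<epsilon>>0. \<exists>R>0. \<forall>a b. a \<noteq> b \<and> N (b - a) = 1 \<longrightarrow>
           (\<forall>z \<in> bisector N a b - ball a R. infdist z (Lab N a b) \<le> \<epsilon>)"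
proof -
  obtain G H where "strictly_convex_C2_norm N G H"
    using assms unfolding C2_strictly_convex_norm_def strictly_convex_C2_norm_def by blast
  then show ?thesis
    using strictly_convex_C2_norm.far_bisector_points_near_Lab by blast
qed

end
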